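(* Let $\mathcal{K}\subseteq\mathbb{R}\cup\{\pm\infty\}$ have nonzero Lebesgue measure, let $\varpi:\mathcal{K}\to\mathbb{R}_{\geq 0}$ be Lebesgue integrable with only countably many zeros, let $d,n,\rho\in\mathbb{N}$, let $\mathbf{f}\in\mathbb{L}^2_{\varpi}(\mathcal{K};\mathbb{R}^d)$ satisfy $\int_{\mathcal{K}}\varpi(\tau)\mathbf{f}(\tau)\mathbf{f}^\top(\tau)\,d\tau\succ 0$, put $F(\tau)=\mathbf{f}(\tau)\otimes I_n$, and let $U\in\mathbb{R}^{n\times n}$ be symmetric with $U\succeq 0$. Suppose there exist a symmetric $Y\in\mathbb{R}^{\rho dn\times\rho dn}$ and $X=[X_1\ \cdots\ X_d]\in\mathbb{R}^{n\times\rho dn}$ with $X_i\in\mathbb{R}^{n\times\rho n}$ such that $$\begin{bmatrix}U & -X\\ -X^\top & Y\end{bmatrix}\succeq 0 .$$ Put $\widehat{X}=\mathrm{Col}_{i=1}^d X_i\in\mathbb{R}^{dn\times\rho n}$ and $W=\int_{\mathcal{K}}\varpi(\tau)(\mathbf{f}^\top(\tau)\otimes I_{\rho n})Y(\mathbf{f}(\tau)\otimes I_{\rho n})\,d\tau$. Then $$\int_{\mathcal{K}}\varpi(\tau)\mathbf{x}^\top(\tau)U\mathbf{x}(\tau)\,d\tau\geq 2\boldsymbol{\vartheta}^\top\widehat{X}\mathbf{z}-\mathbf{z}^\top W\mathbf{z}$$ for all $\mathbf{z}\in\mathbb{R}^{\rho n}$ and $\mathbf{x}\in\mathbb{L}^2_{\varpi}(\mathcal{K};\mathbb{R}^n)$,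 where $\boldsymbol{\vartheta}=\int_{\mathcal{K}}\varpi(\tau)F(\tau)\mathbf{x}(\tau)\,d\tau$. Furthermore, if $\Upsilon\in\mathbb{R}^{dn\times\rho n}$ and $\mathbf{z}\in\mathbb{R}^{\rho n}$ satisfy $\Upsilon\mathbf{z}=\int_{\mathcal{K}}\varpi(\tau)F(\tau)\mathbf{x}(\tau)\,d\tau$, then $$\int_{\mathcal{K}}\varpi(\tau)\mathbf{x}^\top(\tau)U\mathbf{x}(\tau)\,d\tau\geq\mathbf{z}^\top\big[\Upsilon^\top\widehat{X}+\widehat{X}^\top\Upsilon-W\big]\mathbf{z}.$$
   Context: $\mathbb{L}^2_{\varpi}(\mathcal{K};\mathbb{R}^m)$ is the set of Lebesgue integrable functions $\phi:\mathcal{K}\to\mathbb{R}^m$ with $\int_{\mathcal{K}}\varpi\phi^\top\phi\,d\tau<\infty$. $\mathrm{Col}_{i=1}^d X_i$ is the vertical stack of the blocks $X_i$; $\otimes$ is the Kronecker product. *)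

theory Defs
  imports "HOL-Analysis.Analysis"
begin

text \<open>Matrices are represented as functions nat => nat => real with explicit
dimensions; vectors as nat => real.  Only entries with indices below the stated
dimensions are relevant.\<close>

type_synonym rmat = "nat \<Rightarrow> nat \<Rightarrow> real"
type_synonym rvec = "nat \<Rightarrow> real"

definition idm :: rmat where
  "idm i j = (if i = j then 1 else 0)"

definition colv :: "rvec \<Rightarrow> rmat" where "colv v i j = v i"
definition rowv :: "rvec \<Rightarrow> rmat" where "rowv v i j = v j"

definition mtrans :: "rmat \<Rightarrow> rmat" where "mtrans A i j = A j i"

definition kron :: "nat \<Rightarrow> nat \<Rightarrow> rmat \<Rightarrow> rmat \<Rightarrow> rmat" where
  "kron r s A B i j = A (i div r) (j div s) * B (i mod r) (j mod s)"

definition mmul :: "nat \<Rightarrow> rmat \<Rightarrow> rmat \<Rightarrow> rmat" where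
  "mmul k A B i j = (\<Sum>l<k. A i l * B l j)"

definition mvec :: "nat \<Rightarrow> rmat \<Rightarrow> rvec \<Rightarrow> rvec" where
  "mvec k A v i = (\<Sum>l<k. A i l * v l)"

definition qform :: "nat \<Rightarrow> rmat \<Rightarrow> rvec \<Rightarrow> real" where
  "qform k A v = (\<Sum>i<k. \<Sum>j<k. v i * A i j * v j)"

definition msym :: "nat \<Rightarrow> rmat \<Rightarrow> bool" where
  "msym k A \<longleftrightarrow> (\<forall>i<k. \<forall>j<k. A i j = A j i)"

definition psd :: "nat \<Rightarrow> rmat \<Rightarrow> bool" where
  "psd k A \<longleftrightarrow> msym k A \<and> (\<forall>v. qform k A v \<ge> 0)"

definition pd :: "nat \<Rightarrow> rmat \<Rightarrow> bool" where
  "pd k A \<longleftrightarrow> msym k A \<and> (\<forall>v. (\<exists>i<k. v i \<noteq> 0) \<longrightarrow> qform k A v > 0)"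

definition block_mat :: "nat \<Rightarrow> rmat \<Rightarrow> rmat \<Rightarrow> rmat \<Rightarrow> rmat" where
  "block_mat n U X Y i j =
     (if i < n \<and> j < n then U i j
      else if i < n then - X i (j - n)
      else if j < n then - X j (i - n)
      else Y (i - n) (j - n))"

text \<open>For X = [X_0 ... X_{d-1}] with X_i of size n x m: the block X_i.\<close>
definition hblock :: "nat \<Rightarrow> rmat \<Rightarrow> nat \<Rightarrow> rmat" where
  "hblock m X i p q = X p (i * m + q)"

definition colstack :: "nat \<Rightarrow> (nat \<Rightarrow> rmat) \<Rightarrow> rmat" where
  "colstack n Xs r q = Xs (r div n) (r mod n) q"

definition L2w :: "real set \<Rightarrow> (real \<Rightarrow> real) \<Rightarrow> nat \<Rightarrow> (real \<Rightarrow> rvec) \<Rightarrow> bool" where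
  "L2w K w m \<phi> \<longleftrightarrow>
     (\<forall>i<m. set_integrable lebesgue K (\<lambda>t. \<phi> t i)) \<and>
     set_integrable lebesgue K (\<lambda>t. w t * (\<Sum>i<m. (\<phi> t i)\<^sup>2))"

definition Fmat :: "nat \<Rightarrow> (real \<Rightarrow> rvec) \<Rightarrow> real \<Rightarrow> rmat" where
  "Fmat n f t = kron n n (colv (f t)) idm"

definition theta_vec :: "real set \<Rightarrow> (real \<Rightarrow> real) \<Rightarrow> nat \<Rightarrow> (real \<Rightarrow> rvec) \<Rightarrow> (real \<Rightarrow> rvec) \<Rightarrow> rvec" where
  "theta_vec K w n f x i = (LINT t:K|lebesgue. w t * mvec n (Fmat n f t) (x t) i)"

definition Xhat :: "nat \<Rightarrow> nat \<Rightarrow> rmat \<Rightarrow> rmat" where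
  "Xhat \<rho> n X = colstack n (hblock (\<rho> * n) X)"

definition Wmat :: "real set \<Rightarrow> (real \<Rightarrow> real) \<Rightarrow> nat \<Rightarrow> nat \<Rightarrow> nat \<Rightarrow> (real \<Rightarrow> rvec) \<Rightarrow> rmat \<Rightarrow> rmat" where
  "Wmat K w d n \<rho> f Y i j = (LINT t:K|lebesgue. w t *
      mmul (\<rho> * d * n)
        (mmul (\<rho> * d * n) (kron (\<rho> * n) (\<rho> * n) (rowv (f t)) idm) Y)
        (kron (\<rho> * n) (\<rho> * n) (colv (f t)) idm) i j)"

end

theory Submission
  imports Defs
begin

(*
  Fix t and apply the LMI to the vector (x(t), (f(t) \<otimes> I) z). Its cross term
  x(t)^T X (f(t) \<otimes> I) z equals (F(t) x(t))^T Xhat z, since both are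
  sum_i f_i(t) x(t)^T X_i z, and its Y-term is z^T (f(t)^T \<otimes> I) Y (f(t) \<otimes> I) z.
  Multiplying the resulting pointwise inequality by w(t) >= 0 and integrating gives
  the first bound; all integrands are integrable because |ab| <= a^2 + b^2 bounds
  products of L^2_w components. The second bound is the first one rewritten with
  z^T (Upsilon^T Xhat + Xhat^T Upsilon) z = 2 (Upsilon z)^T Xhat z.
*)

lemma sum_lessThan_mult_nat:
  fixes g :: "nat \<Rightarrow> 'a::comm_monoid_add"
  shows "(\<Sum>m<d * k. g m) = (\<Sum>i<d. \<Sum>q<k. g (i * k + q))"
proof -
  have "(\<Sum>q<k. g (i * k + q)) = sum g {i * k..<i * k + k}" for i
    using sum.shift_bounds_nat_ivl[of g 0 "i * k" k] by (simp add: atLeast0LessThan add.commute)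
  then show ?thesis by (simp add: sum.nat_group)
qed

lemma sum_lessThan_add_nat:
  fixes g :: "nat \<Rightarrow> 'a::comm_monoid_add"
  shows "(\<Sum>m<n + N. g m) = (\<Sum>m<n. g m) + (\<Sum>m<N. g (n + m))"
proof -
  have "(\<Sum>m<N. g (n + m)) = sum g {n..<n + N}"
    using sum.shift_bounds_nat_ivl[of g 0 n N] by (simp add: atLeast0LessThan add.commute)
  moreover have "{..<n + N} = {..<n} \<union> {n..<n + N}" by auto
  ultimately show ?thesis by (simp add: sum.union_disjoint ivl_disj_int)
qed

lemma sum_idm_left: "a < k \<Longrightarrow> (\<Sum>i<k. idm a i * z i) = (z a :: real)"
  by (simp add: idm_def if_distrib[of "\<lambda>c. c * _"] cong: if_cong)

lemma mvec_kron_colv_idm: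
  "0 < k \<Longrightarrow> mvec k (kron k k (colv u) idm) v r = u (r div k) * v (r mod k)"
  by (simp add: mvec_def kron_def colv_def mult.assoc sum_distrib_left[symmetric] sum_idm_left)

lemma kron_rowv_idm: "kron k k (rowv u) idm = mtrans (kron k k (colv u) idm)"
  by (auto simp: kron_def rowv_def colv_def mtrans_def idm_def fun_eq_iff)

lemma qform_mmul:
  "qform k (mmul N A B) z = (\<Sum>l<N. (\<Sum>i<k. z i * A i l) * mvec k B z l)"
proof -
  have "qform k (mmul N A B) z = (\<Sum>i<k. \<Sum>j<k. \<Sum>l<N. (z i * A i l) * (B l j * z j))"
    unfolding qform_def mmul_def by (simp add: sum_distrib_left sum_distrib_right mult_ac)
  also have "\<dots> = (\<Sum>i<k. \<Sum>l<N. \<Sum>j<k. (z i * A i l) * (B l j * z j))"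
    by (rule sum.cong[OF refl]) (rule sum.swap)
  also have "\<dots> = (\<Sum>l<N. \<Sum>i<k. \<Sum>j<k. (z i * A i l) * (B l j * z j))"
    by (rule sum.swap)
  finally show ?thesis
    by (simp add: mvec_def sum_product mult_ac)
qed

lemma qform_mmul_mtrans:
  "qform k (mmul N (mtrans A) B) z = (\<Sum>l<N. mvec k A z l * mvec k B z l)"
  by (simp add: qform_mmul mtrans_def mvec_def mult.commute)

lemma qform_congruence:
  "qform k (mmul N (mmul N (mtrans B) Y) B) z = qform N Y (mvec k B z)"
proof -
  have BtY: "(\<Sum>i<k. z i * mmul N (mtrans B) Y i l) = (\<Sum>m<N. mvec k B z m * Y m l)" for l
    unfolding mmul_def mtrans_def mvec_def sum_distrib_left sum_distrib_right
    by (subst sum.swap) (simp add: mult_ac)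
  have "qform k (mmul N (mmul N (mtrans B) Y) B) z
      = (\<Sum>l<N. (\<Sum>m<N. mvec k B z m * Y m l) * mvec k B z l)"
    by (simp add: qform_mmul BtY)
  also have "\<dots> = qform N Y (mvec k B z)"
    unfolding qform_def sum_distrib_right by (subst sum.swap) (simp add: mult_ac)
  finally show ?thesis .
qed

lemma psd_block_mat_bound:
  assumes "psd (n + N) (block_mat n U X Y)"
  shows "2 * (\<Sum>p<n. \<Sum>m<N. a p * X p m * b m) - qform N Y b \<le> qform n U a"
proof -
  define v where "v i = (if i < n then a i else b (i - n))" for i
  have "(\<Sum>m<N. \<Sum>j<n. b m * - X j m * a j) = - (\<Sum>p<n. \<Sum>m<N. a p * X p m * b m)"
    by (subst sum.swap) (simp add: sum_negf mult_ac)
  then have "qform (n + N) (block_mat n U X Y) v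
      = qform n U a - 2 * (\<Sum>p<n. \<Sum>m<N. a p * X p m * b m) + qform N Y b"
    unfolding qform_def sum_lessThan_add_nat
    by (simp add: v_def block_mat_def sum.distrib sum_negf sum_subtractf)
  moreover have "qform (n + N) (block_mat n U X Y) v \<ge> 0"
    using assms unfolding psd_def by blast
  ultimately show ?thesis by linarith
qed

lemma bilinear_kron_colstack:
  "(\<Sum>p<n. \<Sum>m<d * k. a p * X p m * mvec k (kron k k (colv u) idm) z m)
     = (\<Sum>r<d * n. mvec n (kron n n (colv u) idm) a r * mvec k (colstack n (hblock k X)) z r)"
proof (cases "n = 0 \<or> k = 0")
  case True
  then show ?thesis by (auto simp: mvec_def)
next
  case False
  have "(\<Sum>p<n. \<Sum>m<d * k. a p * X p m * mvec k (kron k k (colv u) idm) z m)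
      = (\<Sum>p<n. \<Sum>i<d. \<Sum>q<k. u i * (a p * X p (i * k + q) * z q))"
    unfolding sum_lessThan_mult_nat using False
    by (intro sum.cong refl) (simp add: mvec_kron_colv_idm mult_ac)
  also have "\<dots> = (\<Sum>i<d. \<Sum>p<n. u i * (\<Sum>q<k. a p * X p (i * k + q) * z q))"
    by (subst sum.swap) (simp add: sum_distrib_left)
  also have "\<dots> = (\<Sum>r<d * n. mvec n (kron n n (colv u) idm) a r * mvec k (colstack n (hblock k X)) z r)"
    unfolding sum_lessThan_mult_nat using False
    by (intro sum.cong refl)
      (simp add: mvec_kron_colv_idm, simp add: mvec_def colstack_def hblock_def sum_distrib_left mult_ac)
  finally show ?thesis .
qed

lemma psd_block_mat_kron_bound:
  assumes "psd (n + d * k) (block_mat n U X Y)"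
  shows "2 * (\<Sum>r<d * n. mvec n (kron n n (colv u) idm) a r * mvec k (colstack n (hblock k X)) z r)
           - qform k (mmul (d * k) (mmul (d * k) (kron k k (rowv u) idm) Y) (kron k k (colv u) idm)) z
         \<le> qform n U a"
  using psd_block_mat_bound[OF assms, of a "mvec k (kron k k (colv u) idm) z"]
  by (simp add: bilinear_kron_colstack kron_rowv_idm qform_congruence)

lemma qform_symmetrized_product:
  "qform k (\<lambda>i j. mmul D (mtrans A) B i j + mmul D (mtrans B) A i j - C i j) z
     = 2 * (\<Sum>r<D. mvec k A z r * mvec k B z r) - qform k C z"
proof -
  have "qform k (\<lambda>i j. mmul D (mtrans A) B i j + mmul D (mtrans B) A i j - C i j) z
      = qform k (mmul D (mtrans A) B) z + qform k (mmul D (mtrans B) A) z - qform k C z"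
    unfolding qform_def by (simp add: algebra_simps sum.distrib sum_subtractf)
  then show ?thesis
    by (simp add: qform_mmul_mtrans mult.commute)
qed

lemma set_integral_sum:
  fixes f :: "'i \<Rightarrow> 'a \<Rightarrow> 'b::{banach, second_countable_topology}"
  assumes "\<And>i. i \<in> I \<Longrightarrow> set_integrable M A (f i)"
  shows "set_integrable M A (\<lambda>x. \<Sum>i\<in>I. f i x)"
    and "(LINT x:A|M. (\<Sum>i\<in>I. f i x)) = (\<Sum>i\<in>I. LINT x:A|M. f i x)"
  using assms unfolding set_integrable_def set_lebesgue_integral_def
  by (simp_all add: scaleR_sum_right integral_sum)

lemma set_integral_qform:
  fixes B :: "'a \<Rightarrow> rmat"
  assumes "\<And>i j. i < k \<Longrightarrow> j < k \<Longrightarrow> set_integrable M A (\<lambda>t. B t i j)"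
  shows "set_integrable M A (\<lambda>t. qform k (B t) z)"
    and "(LINT t:A|M. qform k (B t) z) = qform k (\<lambda>i j. LINT t:A|M. B t i j) z"
proof -
  have entry: "set_integrable M A (\<lambda>t. z i * B t i j * z j)" if "i < k" "j < k" for i j
    using assms that by simp
  have row: "set_integrable M A (\<lambda>t. \<Sum>j<k. z i * B t i j * z j)" if "i < k" for i
    using entry that by (intro set_integral_sum(1)) simp
  show "set_integrable M A (\<lambda>t. qform k (B t) z)"
    unfolding qform_def by (intro set_integral_sum(1) row) simp
  show "(LINT t:A|M. qform k (B t) z) = qform k (\<lambda>i j. LINT t:A|M. B t i j) z"
  proof -
    have "(LINT t:A|M. qform k (B t) z) = (\<Sum>i<k. LINT t:A|M. \<Sum>j<k. z i * B t i j * z j)"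
      unfolding qform_def by (rule set_integral_sum(2)) (simp add: row)
    also have "\<dots> = qform k (\<lambda>i j. LINT t:A|M. B t i j) z"
      unfolding qform_def by (intro sum.cong refl) (subst set_integral_sum(2); simp add: entry)
    finally show ?thesis .
  qed
qed

context
  fixes K :: "real set" and w :: "real \<Rightarrow> real"
  assumes K_meas: "K \<in> sets lebesgue"
    and w_int: "set_integrable lebesgue K w"
    and w_nonneg: "\<forall>t\<in>K. w t \<ge> 0"
begin

lemma L2w_product_integrable:
  assumes \<phi>: "L2w K w m \<phi>" and \<psi>: "L2w K w m' \<psi>" and ij: "i < m" "j < m'"
  shows "set_integrable lebesgue K (\<lambda>t. w t * (\<phi> t i * \<psi> t j))"
proof -
  let ?R = "restrict_space lebesgue K"
  let ?S = "\<lambda>t. (\<Sum>l<m. (\<phi> t l)\<^sup>2) + (\<Sum>l<m'. (\<psi> t l)\<^sup>2)"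
  have set_int_iff: "set_integrable lebesgue K g \<longleftrightarrow> integrable ?R g" for g :: "real \<Rightarrow> real"
    by (rule set_integrable_eq) (simp add: K_meas)
  have "integrable ?R (\<lambda>t. w t * (\<Sum>l<m. (\<phi> t l)\<^sup>2) + w t * (\<Sum>l<m'. (\<psi> t l)\<^sup>2))"
    using \<phi> \<psi> unfolding L2w_def set_int_iff by (intro Bochner_Integration.integrable_add) auto
  then have bound_int: "integrable ?R (\<lambda>t. w t * ?S t)"
    by (simp only: distrib_left)
  have meas: "(\<lambda>t. w t * (\<phi> t i * \<psi> t j)) \<in> borel_measurable ?R"
    using w_int \<phi> \<psi> ij unfolding L2w_def set_int_iff
    by (intro borel_measurable_times borel_measurable_integrable) auto
  have bound: "\<bar>w t * (\<phi> t i * \<psi> t j)\<bar> \<le> w t * ?S t" if "t \<in> K" for t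
  proof -
    have "\<bar>\<phi> t i * \<psi> t j\<bar> \<le> (\<phi> t i)\<^sup>2 + (\<psi> t j)\<^sup>2"
      using sum_squares_bound[of "\<bar>\<phi> t i\<bar>" "\<bar>\<psi> t j\<bar>"] abs_ge_zero[of "\<phi> t i * \<psi> t j"]
      unfolding abs_mult power2_abs by linarith
    also have "\<dots> \<le> ?S t"
      using ij by (intro add_mono member_le_sum) auto
    finally have "w t * \<bar>\<phi> t i * \<psi> t j\<bar> \<le> w t * ?S t"
      using w_nonneg that by (intro mult_left_mono) auto
    then show ?thesis
      using w_nonneg that by (simp only: abs_mult abs_of_nonneg)
  qed
  show ?thesis
    unfolding set_int_iff
  proof (rule Bochner_Integration.integrable_bound[OF bound_int meas], rule AE_I2)
    fix t assume "t \<in> space ?R"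
    then have "t \<in> K" by (simp add: space_restrict_space)
    then show "norm (w t * (\<phi> t i * \<psi> t j)) \<le> norm (w t * ?S t)"
      using bound abs_ge_self[of "w t * ?S t"] unfolding real_norm_def by fastforce
  qed
qed

lemma kron_congruence_integrable:
  assumes f_L2: "L2w K w d f"
  shows "set_integrable lebesgue K (\<lambda>t. w t *
           mmul (d * k) (mmul (d * k) (kron k k (rowv (f t)) idm) Y) (kron k k (colv (f t)) idm) i j)"
proof -
  have "(\<lambda>t. w t * mmul (d * k) (mmul (d * k) (kron k k (rowv (f t)) idm) Y) (kron k k (colv (f t)) idm) i j)
      = (\<lambda>t. \<Sum>l<d * k. \<Sum>m<d * k. (idm (i mod k) (m mod k) * Y m l * idm (l mod k) (j mod k))
                                     * (w t * (f t (m div k) * f t (l div k))))"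
    unfolding mmul_def kron_def rowv_def colv_def
    by (simp add: sum_distrib_left sum_distrib_right mult_ac)
  moreover have "m div k < d" if "m < d * k" for m
    using that by (simp add: less_mult_imp_div_less mult.commute)
  ultimately show ?thesis
    by (auto intro!: set_integral_sum(1) set_integrable_mult_right L2w_product_integrable[OF f_L2 f_L2])
qed

lemma Fmat_integrand_integrable:
  assumes f_L2: "L2w K w d f" and x_L2: "L2w K w n x" and r: "r < d * n"
  shows "set_integrable lebesgue K (\<lambda>t. w t * mvec n (Fmat n f t) (x t) r)"
proof -
  have "0 < n"
    using r by (cases "n = 0") auto
  moreover have "r div n < d"
    using r by (simp add: less_mult_imp_div_less)
  ultimately show ?thesis
    by (simp add: Fmat_def mvec_kron_colv_idm L2w_product_integrable[OF f_L2 x_L2])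
qed

lemma qform_integrand_integrable:
  assumes x_L2: "L2w K w n x"
  shows "set_integrable lebesgue K (\<lambda>t. w t * qform n U (x t))"
proof -
  have "(\<lambda>t. w t * qform n U (x t)) = (\<lambda>t. \<Sum>i<n. \<Sum>j<n. U i j * (w t * (x t i * x t j)))"
    unfolding qform_def by (simp add: sum_distrib_left mult_ac)
  then show ?thesis
    by (auto intro!: set_integral_sum(1) set_integrable_mult_right L2w_product_integrable[OF x_L2 x_L2])
qed

lemma weighted_integral_qform_lower_bound:
  assumes f_L2: "L2w K w d f" and x_L2: "L2w K w n x"
    and LMI: "psd (n + \<rho> * d * n) (block_mat n U X Y)"
  shows "2 * (\<Sum>r<d * n. theta_vec K w n f x r * mvec (\<rho> * n) (Xhat \<rho> n X) z r)
           - qform (\<rho> * n) (Wmat K w d n \<rho> f Y) z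
         \<le> (LINT t:K|lebesgue. w t * qform n U (x t))"
proof -
  define k where "k = \<rho> * n"
  define M where "M t = mmul (d * k) (mmul (d * k) (kron k k (rowv (f t)) idm) Y) (kron k k (colv (f t)) idm)"
    for t
  define c where "c = mvec k (Xhat \<rho> n X) z"
  note M_int = kron_congruence_integrable[OF f_L2, of k Y, folded M_def]
  note Fx_int = Fmat_integrand_integrable[OF f_L2 x_L2]
  note U_int = qform_integrand_integrable[OF x_L2]
  have W_eq: "Wmat K w d n \<rho> f Y = (\<lambda>i j. LINT t:K|lebesgue. w t * M t i j)"
    unfolding Wmat_def M_def k_def by (simp add: mult_ac)
  have pointwise: "2 * (\<Sum>r<d * n. (w t * mvec n (Fmat n f t) (x t) r) * c r)
      - qform k (\<lambda>i j. w t * M t i j) z \<le> w t * qform n U (x t)" if "t \<in> K" for t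
  proof -
    have "2 * (\<Sum>r<d * n. mvec n (Fmat n f t) (x t) r * c r) - qform k (M t) z \<le> qform n U (x t)"
      using psd_block_mat_kron_bound[of n d k U X Y "f t" "x t" z] LMI
      unfolding Fmat_def c_def Xhat_def M_def k_def by (simp add: mult_ac)
    then have "w t * (2 * (\<Sum>r<d * n. mvec n (Fmat n f t) (x t) r * c r) - qform k (M t) z)
        \<le> w t * qform n U (x t)"
      using w_nonneg that by (simp add: mult_left_mono)
    then show ?thesis
      unfolding qform_def by (simp add: sum_distrib_left right_diff_distrib mult_ac)
  qed
  let ?lin = "\<lambda>t. 2 * (\<Sum>r<d * n. (w t * mvec n (Fmat n f t) (x t) r) * c r)"
  have lin_int: "set_integrable lebesgue K ?lin"
    by (auto intro!: set_integrable_mult_right set_integral_sum(1) set_integrable_mult_left Fx_int)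
  have lin_eq: "(LINT t:K|lebesgue. ?lin t) = 2 * (\<Sum>r<d * n. theta_vec K w n f x r * c r)"
    unfolding theta_vec_def set_integral_mult_right
    by (subst set_integral_sum(2)) (auto intro!: set_integrable_mult_left Fx_int)
  note quad = set_integral_qform[where B = "\<lambda>t i j. w t * M t i j", OF M_int]
  have "2 * (\<Sum>r<d * n. theta_vec K w n f x r * c r) - qform k (Wmat K w d n \<rho> f Y) z
      = (LINT t:K|lebesgue. ?lin t - qform k (\<lambda>i j. w t * M t i j) z)"
    using set_integral_diff(2)[OF lin_int quad(1)] unfolding lin_eq quad(2) W_eq by simp
  also have "\<dots> \<le> (LINT t:K|lebesgue. w t * qform n U (x t))"
    using set_integral_diff(1)[OF lin_int quad(1)] U_int pointwise by (rule set_integral_mono)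
  finally show ?thesis
    unfolding c_def k_def .
qed

end

theorem theorem2:
  fixes K :: "real set" and w :: "real \<Rightarrow> real" and d n \<rho> :: nat
    and f :: "real \<Rightarrow> rvec" and U Y X :: rmat
  assumes K_meas: "K \<in> sets lebesgue" and K_pos: "emeasure lebesgue K \<noteq> 0"
    and w_nonneg: "\<forall>t\<in>K. w t \<ge> 0"
    and w_int: "set_integrable lebesgue K w"
    and w_zeros: "countable {t\<in>K. w t = 0}"
    and f_L2: "L2w K w d f"
    and f_pd: "pd d (\<lambda>k l. LINT t:K|lebesgue. w t * (f t k * f t l))"
    and U_psd: "psd n U"
    and Y_sym: "msym (\<rho> * d * n) Y"
    and LMI: "psd (n + \<rho> * d * n) (block_mat n U X Y)"
  shows
    "(\<forall>z x. L2w K w n x \<longrightarrow>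
        (LINT t:K|lebesgue. w t * qform n U (x t))
          \<ge> 2 * (\<Sum>i<d * n. theta_vec K w n f x i * mvec (\<rho> * n) (Xhat \<rho> n X) z i)
             - qform (\<rho> * n) (Wmat K w d n \<rho> f Y) z)
   \<and> (\<forall>\<Upsilon> z x. L2w K w n x \<longrightarrow>
        (\<forall>i<d * n. mvec (\<rho> * n) \<Upsilon> z i = theta_vec K w n f x i) \<longrightarrow>
        (LINT t:K|lebesgue. w t * qform n U (x t))
          \<ge> qform (\<rho> * n)
               (\<lambda>i j. mmul (d * n) (mtrans \<Upsilon>) (Xhat \<rho> n X) i j
                     + mmul (d * n) (mtrans (Xhat \<rho> n X)) \<Upsilon> i j
                     - Wmat K w d n \<rho> f Y i j) z)"
proof -
  have lower_bound: "L2w K w n x \<Longrightarrow>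
      2 * (\<Sum>r<d * n. theta_vec K w n f x r * mvec (\<rho> * n) (Xhat \<rho> n X) z r)
        - qform (\<rho> * n) (Wmat K w d n \<rho> f Y) z
      \<le> (LINT t:K|lebesgue. w t * qform n U (x t))" for z x
    by (rule weighted_integral_qform_lower_bound[OF K_meas w_int w_nonneg f_L2 _ LMI])
  then show ?thesis
    unfolding qform_symmetrized_product by (auto cong: sum.cong_simp)
qed

end
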